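(* Let $d,n\ge1$. Let $x^{(1)},\dots,x^{(n)}\in\mathbb{R}^d$ be i.i.d. $\mathcal{N}(0,I_d)$, $w_\star\sim\mathcal{N}(0,I_d)$ independent, $y^{(i)}=\langle w_\star,x^{(i)}\rangle$, $z^{(i)}=\begin{bmatrix}x^{(i)}\\ y^{(i)}\end{bmatrix}\in\mathbb{R}^{d+1}$, and $C=\frac1n\sum_{i=1}^n z^{(i)}{z^{(i)}}^\top$. Fix $j\in\{1,\dots,d\}$ and for $X\in\mathbb{R}^{(d+1)\times(d+1)}$ define $$f_j(X)=\mathbb{E}\big[(\langle C,X\rangle+w_\star[j])^2\big],\qquad \langle C,X\rangle=\mathrm{tr}(CX^\top).$$ Then a global minimum of $f_j$ is $$X_j=-\frac{1}{\frac{n-1}{n}+\frac{d+2}{n}}\,E_{d+1,j},$$ where $E_{d+1,j}$ is the matrix whose $(d+1,j)$ entry is $1$ and all other entries are $0$.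
   Context: $w_\star[j]$ denotes the $j$-th coordinate of $w_\star$. *)

theory Defs
  imports "HOL-Probability.Probability"
begin

definition std_gauss :: "real measure" where
  "std_gauss = density lborel std_normal_density"

text \<open>Sample space: the data matrix (entries x^(i)[k], i in 1..n, k in 1..d, all i.i.d. N(0,1))
  together with w_star (coordinates k in 1..d, i.i.d. N(0,1)), independent of the data.\<close>
definition model :: "nat \<Rightarrow> nat \<Rightarrow> ((nat \<times> nat \<Rightarrow> real) \<times> (nat \<Rightarrow> real)) measure" where
  "model n d = (PiM ({1..n} \<times> {1..d}) (\<lambda>_. std_gauss)) \<Otimes>\<^sub>M (PiM {1..d} (\<lambda>_. std_gauss))"

text \<open>z^(i) in R^(d+1), coordinates 1..d+1: z^(i)[k] = x^(i)[k] for k \<le> d, z^(i)[d+1] = y^(i) = <w_star, x^(i)>.\<close>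
definition zvec :: "nat \<Rightarrow> (nat \<times> nat \<Rightarrow> real) \<times> (nat \<Rightarrow> real) \<Rightarrow> nat \<Rightarrow> nat \<Rightarrow> real" where
  "zvec d \<omega> i k = (if k \<le> d then fst \<omega> (i, k) else (\<Sum>l = 1..d. snd \<omega> l * fst \<omega> (i, l)))"

definition Cmat :: "nat \<Rightarrow> nat \<Rightarrow> (nat \<times> nat \<Rightarrow> real) \<times> (nat \<Rightarrow> real) \<Rightarrow> nat \<Rightarrow> nat \<Rightarrow> real" where
  "Cmat n d \<omega> a b = (1 / real n) * (\<Sum>i = 1..n. zvec d \<omega> i a * zvec d \<omega> i b)"

definition frob :: "nat \<Rightarrow> (nat \<Rightarrow> nat \<Rightarrow> real) \<Rightarrow> (nat \<Rightarrow> nat \<Rightarrow> real) \<Rightarrow> real" where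
  "frob d C X = (\<Sum>a = 1..d+1. \<Sum>b = 1..d+1. C a b * X a b)"

definition fobj :: "nat \<Rightarrow> nat \<Rightarrow> nat \<Rightarrow> (nat \<Rightarrow> nat \<Rightarrow> real) \<Rightarrow> real" where
  "fobj n d j X = (\<integral>\<omega>. (frob d (Cmat n d \<omega>) X + snd \<omega> j)\<^sup>2 \<partial>model n d)"

definition Eunit :: "nat \<Rightarrow> nat \<Rightarrow> nat \<Rightarrow> nat \<Rightarrow> real" where
  "Eunit a b = (\<lambda>p q. if p = a \<and> q = b then 1 else 0)"

end

theory Submission
  imports Defs
begin

(* f_j(X) is the mean squared error of the linear predictor <C, X> of -w_star[j]. It is therefore
   minimal at any X_j whose residual <C, X_j> + w_star[j] is orthogonal in L^2 to every entry of C,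
   for then f_j(X) = f_j(X_j) + E[<C, X - X_j>^2]. For X_j = -c E_{d+1,j} the residual is
   w_star[j] - c C_{d+1,j}. Expanding into Gaussian monomials (Isserlis' formula up to degree four)
   gives E[C w_star[j]] = S and E[C C_{d+1,j}] = (1 + (d+1)/n) S with S = E_{d+1,j} + E_{j,d+1}, so
   orthogonality holds exactly for c = 1 / (1 + (d+1)/n), the constant of the statement. *)

section \<open>Moments of Gaussian monomials\<close>

lemma prob_space_std_gauss: "prob_space std_gauss"
  unfolding std_gauss_def by (rule prob_space_normal_density) simp

lemma integrable_std_gauss_power: "integrable std_gauss (\<lambda>t. t ^ k)"
  unfolding std_gauss_def
  by (subst integrable_density) (auto intro: integrable_std_normal_moment)

lemma integrable_std_gauss_abs_power: "integrable std_gauss (\<lambda>t. \<bar>t\<bar> ^ k)"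
  unfolding std_gauss_def
  by (subst integrable_density) (auto intro: integrable_std_normal_moment_abs)

definition gauss_moment :: "nat \<Rightarrow> real" where
  "gauss_moment k = (\<integral>t. t ^ k \<partial>std_gauss)"

lemma gauss_moment_even: "gauss_moment (2 * k) = fact (2 * k) / (2 ^ k * fact k)"
  unfolding gauss_moment_def std_gauss_def
  by (subst integral_density) (auto simp: integral_std_normal_moment_even)

lemma gauss_moment_odd:
  assumes "odd k"
  shows "gauss_moment k = 0"
proof -
  obtain m where "k = 2 * m + 1" using assms by (rule oddE)
  then show ?thesis
    unfolding gauss_moment_def std_gauss_def
    using integral_std_normal_moment_odd[of m] by (subst integral_density) simp_all
qed

(* Stated with Suc because that is how the simplifier evaluates count_list. *)
lemma gauss_moment_small [simp]:
  "gauss_moment 0 = 1" "gauss_moment (Suc 0) = 0" "gauss_moment (Suc (Suc 0)) = 1"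
  "gauss_moment (Suc (Suc (Suc 0))) = 0" "gauss_moment (Suc (Suc (Suc (Suc 0)))) = 3"
proof -
  have "gauss_moment 1 = 0" "gauss_moment 3 = 0" by (simp_all add: gauss_moment_odd)
  moreover have "gauss_moment 0 = 1" "gauss_moment 2 = 1" "gauss_moment 4 = 3"
    using gauss_moment_even[of 0] gauss_moment_even[of 1] gauss_moment_even[of 2]
    by (simp_all add: fact_numeral)
  ultimately show "gauss_moment 0 = 1" "gauss_moment (Suc 0) = 0" "gauss_moment (Suc (Suc 0)) = 1"
    "gauss_moment (Suc (Suc (Suc 0))) = 0" "gauss_moment (Suc (Suc (Suc (Suc 0)))) = 3"
    by (simp_all add: numeral_eq_Suc)
qed

abbreviation std_gauss_vec :: "'i set \<Rightarrow> ('i \<Rightarrow> real) measure" where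
  "std_gauss_vec I \<equiv> PiM I (\<lambda>_. std_gauss)"

lemma prob_space_std_gauss_vec: "prob_space (std_gauss_vec I)"
  by (intro prob_space_PiM prob_space_std_gauss)

definition gauss_monomial :: "'i set \<Rightarrow> 'i list \<Rightarrow> real" where
  "gauss_monomial I ks = (\<integral>x. prod_list (map x ks) \<partial>std_gauss_vec I)"

lemma prod_list_map_eq_prod_count_list:
  fixes x :: "'i \<Rightarrow> 'a::comm_monoid_mult"
  assumes "finite I" "set ks \<subseteq> I"
  shows "prod_list (map x ks) = (\<Prod>t\<in>I. x t ^ count_list ks t)"
  using assms(2)
proof (induction ks)
  case (Cons k ks)
  have "(\<Prod>t\<in>I. x t ^ count_list (k # ks) t)
      = (\<Prod>t\<in>I. (if t = k then x t else 1) * x t ^ count_list ks t)"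
    by (intro prod.cong) auto
  also have "\<dots> = x k * (\<Prod>t\<in>I. x t ^ count_list ks t)"
    using Cons.prems assms(1) by (simp add: prod.distrib)
  finally show ?case using Cons by simp
qed simp

context
  fixes I :: "'i set" and ks :: "'i list"
  assumes finite: "finite I" and ks: "set ks \<subseteq> I"
begin

interpretation product_sigma_finite "\<lambda>_. std_gauss"
  unfolding product_sigma_finite_def
  using prob_space_std_gauss prob_space_imp_sigma_finite by blast

lemma integrable_std_gauss_vec_monomial:
  "integrable (std_gauss_vec I) (\<lambda>x. prod_list (map x ks))"
  unfolding prod_list_map_eq_prod_count_list[OF finite ks]
  by (rule product_integrable_prod[OF finite]) (rule integrable_std_gauss_power)

lemma gauss_monomial_eq_prod:
  "gauss_monomial I ks = (\<Prod>t\<in>set ks. gauss_moment (count_list ks t))"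
proof -
  have "gauss_monomial I ks = (\<Prod>t\<in>I. gauss_moment (count_list ks t))"
    unfolding gauss_monomial_def prod_list_map_eq_prod_count_list[OF finite ks] gauss_moment_def
    by (rule product_integral_prod[OF finite]) (rule integrable_std_gauss_power)
  also have "\<dots> = (\<Prod>t\<in>set ks. gauss_moment (count_list ks t))"
    by (rule prod.mono_neutral_right[OF finite ks]) simp
  finally show ?thesis .
qed

lemma gauss_monomial_odd:
  assumes "odd (length ks)"
  shows "gauss_monomial I ks = 0"
proof -
  have "\<exists>t\<in>set ks. odd (count_list ks t)"
  proof (rule ccontr)
    assume "\<not> ?thesis"
    then have "even (\<Sum>t\<in>set ks. count_list ks t)" by (auto intro!: dvd_sum)
    with assms show False by (simp add: sum_count_set)
  qed
  then show ?thesis by (auto simp: gauss_monomial_eq_prod intro: gauss_moment_odd)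
qed

end

lemma gauss_monomial_two:
  assumes "finite I" "p \<in> I" "q \<in> I"
  shows "gauss_monomial I [p, q] = (if p = q then 1 else 0)"
  using assms by (cases "p = q") (simp_all add: gauss_monomial_eq_prod)

lemma gauss_monomial_four:
  assumes "finite I" "p \<in> I" "q \<in> I" "r \<in> I" "s \<in> I"
  shows "gauss_monomial I [p, q, r, s] = (if p = q \<and> r = s then 1 else 0)
    + (if p = r \<and> q = s then 1 else 0) + (if p = s \<and> q = r then 1 else 0)"
  using assms
  by (cases "p = q"; cases "p = r"; cases "p = s"; cases "q = r"; cases "q = s"; cases "r = s")
    (simp_all add: gauss_monomial_eq_prod insert_commute)

section \<open>Random variables with moments of all orders\<close>

(* All random variables below are polynomials in independent Gaussians; this class is closed
   under sums and products and supplies every integrability side condition. *)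
definition has_moments :: "'a measure \<Rightarrow> ('a \<Rightarrow> real) \<Rightarrow> bool" where
  "has_moments M f \<longleftrightarrow> f \<in> borel_measurable M \<and> (\<forall>k. integrable M (\<lambda>x. \<bar>f x\<bar> ^ k))"

lemma has_moments_integrable:
  assumes "has_moments M f"
  shows "integrable M f"
proof -
  have "f \<in> borel_measurable M" "integrable M (\<lambda>x. \<bar>f x\<bar> ^ 1)"
    using assms unfolding has_moments_def by blast+
  then show ?thesis by (simp add: integrable_abs_iff)
qed

lemma has_moments_const:
  assumes "prob_space M"
  shows "has_moments M (\<lambda>_. c)"
proof -
  interpret prob_space M by fact
  show ?thesis by (simp add: has_moments_def)
qed

lemma abs_add_power_le: "\<bar>a + b\<bar> ^ k \<le> 2 ^ k * (\<bar>a\<bar> ^ k + \<bar>b\<bar> ^ k :: real)"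
proof -
  have "\<bar>a + b\<bar> ^ k \<le> (2 * max \<bar>a\<bar> \<bar>b\<bar>) ^ k" by (intro power_mono) auto
  also have "\<dots> = 2 ^ k * max \<bar>a\<bar> \<bar>b\<bar> ^ k" by (simp add: power_mult_distrib)
  also have "\<dots> \<le> 2 ^ k * (\<bar>a\<bar> ^ k + \<bar>b\<bar> ^ k)" by (simp add: max_def)
  finally show ?thesis .
qed

lemma abs_mult_power_le: "\<bar>a * b\<bar> ^ k \<le> \<bar>a\<bar> ^ (2 * k) + (\<bar>b\<bar> ^ (2 * k) :: real)"
proof -
  have "\<bar>a * b\<bar> ^ k = \<bar>a\<bar> ^ k * \<bar>b\<bar> ^ k" by (simp add: abs_mult power_mult_distrib)
  also have "\<dots> \<le> (\<bar>a\<bar> ^ k)\<^sup>2 + (\<bar>b\<bar> ^ k)\<^sup>2"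
    using sum_squares_bound[of "\<bar>a\<bar> ^ k" "\<bar>b\<bar> ^ k"]
      zero_le_power2[of "\<bar>a\<bar> ^ k"] zero_le_power2[of "\<bar>b\<bar> ^ k"]
    by linarith
  finally show ?thesis by (simp add: power_mult[symmetric] mult.commute)
qed

lemma has_moments_add:
  assumes "has_moments M f" "has_moments M g"
  shows "has_moments M (\<lambda>x. f x + g x)"
  unfolding has_moments_def
proof (intro conjI allI)
  have [measurable]: "f \<in> borel_measurable M" "g \<in> borel_measurable M"
    using assms by (simp_all add: has_moments_def)
  show "(\<lambda>x. f x + g x) \<in> borel_measurable M" by measurable
  fix k
  show "integrable M (\<lambda>x. \<bar>f x + g x\<bar> ^ k)"
  proof (rule Bochner_Integration.integrable_bound)
    show "integrable M (\<lambda>x. 2 ^ k * (\<bar>f x\<bar> ^ k + \<bar>g x\<bar> ^ k))"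
      using assms by (simp add: has_moments_def)
  qed (simp_all add: abs_add_power_le)
qed

lemma has_moments_mult:
  assumes "has_moments M f" "has_moments M g"
  shows "has_moments M (\<lambda>x. f x * g x)"
  unfolding has_moments_def
proof (intro conjI allI)
  have [measurable]: "f \<in> borel_measurable M" "g \<in> borel_measurable M"
    using assms by (simp_all add: has_moments_def)
  show "(\<lambda>x. f x * g x) \<in> borel_measurable M" by measurable
  fix k
  show "integrable M (\<lambda>x. \<bar>f x * g x\<bar> ^ k)"
  proof (rule Bochner_Integration.integrable_bound)
    show "integrable M (\<lambda>x. \<bar>f x\<bar> ^ (2 * k) + \<bar>g x\<bar> ^ (2 * k))"
      using assms by (simp add: has_moments_def)
  qed (simp_all add: abs_mult_power_le)
qed

lemma has_moments_sum:
  assumes "prob_space M" "\<And>a. a \<in> A \<Longrightarrow> has_moments M (f a)"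
  shows "has_moments M (\<lambda>x. \<Sum>a\<in>A. f a x)"
  using assms(2)
proof (induction A rule: infinite_finite_induct)
  case (insert a A)
  then show ?case by (simp add: has_moments_add)
qed (simp_all add: has_moments_const assms(1))

lemma has_moments_diff:
  assumes "prob_space M" "has_moments M f" "has_moments M g"
  shows "has_moments M (\<lambda>x. f x - g x)"
  using has_moments_add[OF assms(2)
      has_moments_mult[OF has_moments_const[OF assms(1), of "-1"] assms(3)]]
  by simp

lemma has_moments_component:
  assumes "finite I" "p \<in> I"
  shows "has_moments (std_gauss_vec I) (\<lambda>x. x p)"
  unfolding has_moments_def
proof (intro conjI allI)
  interpret product_prob_space "\<lambda>_. std_gauss"
    by (simp add: product_prob_space_def product_prob_space_axioms_def product_sigma_finite_def
        prob_space_std_gauss prob_space_imp_sigma_finite)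
  have "(\<lambda>x. x p) \<in> std_gauss_vec I \<rightarrow>\<^sub>M std_gauss"
    using assms(2) by measurable
  then show "(\<lambda>x. x p) \<in> borel_measurable (std_gauss_vec I)"
    by (simp add: std_gauss_def)
  fix k
  have "integrable (std_gauss_vec I) (\<lambda>x. \<Prod>t\<in>I. if t = p then \<bar>x t\<bar> ^ k else 1)"
  proof (rule product_integrable_prod[OF assms(1)])
    show "integrable std_gauss (\<lambda>y. if t = p then \<bar>y\<bar> ^ k else 1)" for t
      by (cases "t = p") (simp_all add: integrable_std_gauss_abs_power)
  qed
  then show "integrable (std_gauss_vec I) (\<lambda>x. \<bar>x p\<bar> ^ k)"
    using assms by simp
qed

lemma
  assumes "sigma_finite_measure M1" "sigma_finite_measure M2" "integrable M1 f" "integrable M2 g"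
  shows integrable_pair_measure_mult:
      "integrable (M1 \<Otimes>\<^sub>M M2) (\<lambda>\<omega>. f (fst \<omega>) * g (snd \<omega>) :: real)"
    and integral_pair_measure_mult:
      "(\<integral>\<omega>. f (fst \<omega>) * g (snd \<omega>) \<partial>(M1 \<Otimes>\<^sub>M M2)) = integral\<^sup>L M1 f * integral\<^sup>L M2 g"
proof -
  interpret pair_sigma_finite M1 M2
    using assms(1,2) by (simp add: pair_sigma_finite_def)
  have [measurable]: "f \<in> borel_measurable M1" "g \<in> borel_measurable M2"
    using assms(3,4) by auto
  show integrable: "integrable (M1 \<Otimes>\<^sub>M M2) (\<lambda>\<omega>. f (fst \<omega>) * g (snd \<omega>))"
  proof (rule Fubini_integrable)
    have "(\<lambda>x. \<integral>y. norm (f (fst (x, y)) * g (snd (x, y))) \<partial>M2)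
        = (\<lambda>x. norm (f x) * \<integral>y. norm (g y) \<partial>M2)"
      by (simp add: abs_mult)
    then show "integrable M1 (\<lambda>x. \<integral>y. norm (f (fst (x, y)) * g (snd (x, y))) \<partial>M2)"
      using assms(3) by simp
  qed (use assms(4) in simp_all)
  have "(\<integral>\<omega>. f (fst \<omega>) * g (snd \<omega>) \<partial>(M1 \<Otimes>\<^sub>M M2)) = (\<integral>x. (\<integral>y. f x * g y \<partial>M2) \<partial>M1)"
    using integral_fst[of "\<lambda>x y. f x * g y"] integrable by (simp add: case_prod_beta')
  then show "(\<integral>\<omega>. f (fst \<omega>) * g (snd \<omega>) \<partial>(M1 \<Otimes>\<^sub>M M2)) = integral\<^sup>L M1 f * integral\<^sup>L M2 g"
    by simp
qed

lemma has_moments_fst: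
  assumes "has_moments M1 f" "prob_space M1" "prob_space M2"
  shows "has_moments (M1 \<Otimes>\<^sub>M M2) (\<lambda>\<omega>. f (fst \<omega>))"
proof -
  interpret prob_space M2 by fact
  show ?thesis
    using assms integrable_pair_measure_mult[of M1 M2 "\<lambda>x. \<bar>f x\<bar> ^ _" "\<lambda>_. 1"]
    by (auto simp: has_moments_def prob_space_imp_sigma_finite intro: measurable_fst'')
qed

lemma has_moments_snd:
  assumes "has_moments M2 g" "prob_space M1" "prob_space M2"
  shows "has_moments (M1 \<Otimes>\<^sub>M M2) (\<lambda>\<omega>. g (snd \<omega>))"
proof -
  interpret prob_space M1 by fact
  show ?thesis
    using assms integrable_pair_measure_mult[of M1 M2 "\<lambda>_. 1" "\<lambda>x. \<bar>g x\<bar> ^ _"]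
    by (auto simp: has_moments_def prob_space_imp_sigma_finite intro: measurable_snd'')
qed

section \<open>Least squares for the Frobenius pairing\<close>

lemma integral_square_add_orthogonal:
  fixes f g :: "'a \<Rightarrow> real"
  assumes "integrable M (\<lambda>x. (f x)\<^sup>2)" "integrable M (\<lambda>x. (g x)\<^sup>2)"
    and "integrable M (\<lambda>x. f x * g x)" "(\<integral>x. f x * g x \<partial>M) = 0"
  shows "(\<integral>x. (f x + g x)\<^sup>2 \<partial>M) = (\<integral>x. (f x)\<^sup>2 \<partial>M) + (\<integral>x. (g x)\<^sup>2 \<partial>M)"
proof -
  have "(\<lambda>x. (f x + g x)\<^sup>2) = (\<lambda>x. (f x)\<^sup>2 + (g x)\<^sup>2 + 2 * (f x * g x))"
    by (simp add: power2_sum mult.assoc)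
  then show ?thesis
    using assms by (simp add: Bochner_Integration.integral_add)
qed

lemma frob_diff: "frob d C X = frob d C Y + frob d C (\<lambda>p q. X p q - Y p q)"
  unfolding frob_def by (simp add: right_diff_distrib sum_subtractf)

lemma frob_scaled_Eunit:
  assumes "a \<in> {1..d + 1}" "b \<in> {1..d + 1}"
  shows "frob d C (\<lambda>p q. c * Eunit a b p q) = c * C a b"
proof -
  have "frob d C (\<lambda>p q. c * Eunit a b p q)
      = (\<Sum>p\<in>{1..d + 1}. \<Sum>q\<in>{1..d + 1}. if p = a \<and> q = b then c * C a b else 0)"
    unfolding frob_def by (intro sum.cong refl) (simp add: Eunit_def)
  also have "\<dots> = (\<Sum>p\<in>{1..d + 1}. if p = a then c * C a b else 0)"
    using assms(2) by (intro sum.cong refl) (simp del: sum.cl_ivl_Suc)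
  also have "\<dots> = c * C a b"
    using assms(1) by (simp del: sum.cl_ivl_Suc)
  finally show ?thesis .
qed

lemma integral_frob_mult_eq_0:
  assumes "\<And>a b. a \<in> {1..d + 1} \<Longrightarrow> b \<in> {1..d + 1} \<Longrightarrow> integrable M (\<lambda>\<omega>. C \<omega> a b * g \<omega>)"
    and "\<And>a b. a \<in> {1..d + 1} \<Longrightarrow> b \<in> {1..d + 1} \<Longrightarrow> (\<integral>\<omega>. C \<omega> a b * g \<omega> \<partial>M) = 0"
  shows "(\<integral>\<omega>. frob d (C \<omega>) Y * g \<omega> \<partial>M) = 0"
proof -
  have "(\<lambda>\<omega>. frob d (C \<omega>) Y * g \<omega>)
      = (\<lambda>\<omega>. \<Sum>a\<in>{1..d + 1}. \<Sum>b\<in>{1..d + 1}. Y a b * (C \<omega> a b * g \<omega>))"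
    unfolding frob_def sum_distrib_right by (simp only: mult_ac)
  moreover have "integrable M (\<lambda>\<omega>. \<Sum>b\<in>{1..d + 1}. Y a b * (C \<omega> a b * g \<omega>))"
    if "a \<in> {1..d + 1}" for a
    using assms(1) that by (intro Bochner_Integration.integrable_sum integrable_mult_right) auto
  ultimately show ?thesis
    using assms by (simp add: integral_sum' del: sum.cl_ivl_Suc)
qed

lemma frob_least_squares:
  assumes "prob_space M"
    and C: "\<And>a b. a \<in> {1..d + 1} \<Longrightarrow> b \<in> {1..d + 1} \<Longrightarrow> has_moments M (\<lambda>\<omega>. C \<omega> a b)"
    and g: "has_moments M g"
    and orthogonal:
      "\<And>a b. a \<in> {1..d + 1} \<Longrightarrow> b \<in> {1..d + 1} \<Longrightarrow> (\<integral>\<omega>. C \<omega> a b * g \<omega> \<partial>M) = 0"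
  shows "(\<integral>\<omega>. (g \<omega>)\<^sup>2 \<partial>M) \<le> (\<integral>\<omega>. (frob d (C \<omega>) Y + g \<omega>)\<^sup>2 \<partial>M)"
proof -
  have L: "has_moments M (\<lambda>\<omega>. frob d (C \<omega>) Y)"
    unfolding frob_def using assms(1) C
    by (intro has_moments_sum has_moments_mult has_moments_const) auto
  have "(\<integral>\<omega>. frob d (C \<omega>) Y * g \<omega> \<partial>M) = 0"
    using C g orthogonal by (intro integral_frob_mult_eq_0 has_moments_integrable has_moments_mult)
  then have "(\<integral>\<omega>. (frob d (C \<omega>) Y + g \<omega>)\<^sup>2 \<partial>M)
      = (\<integral>\<omega>. (frob d (C \<omega>) Y)\<^sup>2 \<partial>M) + (\<integral>\<omega>. (g \<omega>)\<^sup>2 \<partial>M)"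
    using L g unfolding power2_eq_square
    by (intro integral_square_add_orthogonal[unfolded power2_eq_square]
        has_moments_integrable has_moments_mult)
  moreover have "0 \<le> (\<integral>\<omega>. (frob d (C \<omega>) Y)\<^sup>2 \<partial>M)"
    by (rule Bochner_Integration.integral_nonneg) simp
  ultimately show ?thesis by simp
qed

section \<open>The data model\<close>

abbreviation data_index :: "nat \<Rightarrow> nat \<Rightarrow> (nat \<times> nat) set" where
  "data_index n d \<equiv> {1..n} \<times> {1..d}"

lemma prob_space_model: "prob_space (model n d)"
  unfolding model_def by (intro prob_space_pair prob_space_std_gauss_vec)

lemma has_moments_model_data:
  "p \<in> data_index n d \<Longrightarrow> has_moments (model n d) (\<lambda>\<omega>. fst \<omega> p)"
  unfolding model_def
  by (intro has_moments_fst has_moments_component prob_space_std_gauss_vec) auto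

lemma has_moments_model_weight:
  "l \<in> {1..d} \<Longrightarrow> has_moments (model n d) (\<lambda>\<omega>. snd \<omega> l)"
  unfolding model_def
  by (intro has_moments_snd has_moments_component prob_space_std_gauss_vec) auto

definition model_monomial ::
    "(nat \<times> nat) list \<Rightarrow> nat list \<Rightarrow> (nat \<times> nat \<Rightarrow> real) \<times> (nat \<Rightarrow> real) \<Rightarrow> real" where
  "model_monomial ks ls \<omega> = prod_list (map (fst \<omega>) ks) * prod_list (map (snd \<omega>) ls)"

lemma
  assumes "set ks \<subseteq> data_index n d" "set ls \<subseteq> {1..d}"
  shows integrable_model_monomial: "integrable (model n d) (model_monomial ks ls)"
    and integral_model_monomial: "integral\<^sup>L (model n d) (model_monomial ks ls)
      = gauss_monomial (data_index n d) ks * gauss_monomial {1..d} ls"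
proof -
  have "integrable (std_gauss_vec (data_index n d)) (\<lambda>x. prod_list (map x ks))"
    "integrable (std_gauss_vec {1..d}) (\<lambda>w. prod_list (map w ls))"
    using assms by (simp_all add: integrable_std_gauss_vec_monomial)
  note integrable_pair_measure_mult[OF _ _ this] integral_pair_measure_mult[OF _ _ this]
  then show "integrable (model n d) (model_monomial ks ls)"
    "integral\<^sup>L (model n d) (model_monomial ks ls)
      = gauss_monomial (data_index n d) ks * gauss_monomial {1..d} ls"
    by (simp_all add: model_def model_monomial_def[abs_def] gauss_monomial_def
        prob_space_imp_sigma_finite prob_space_std_gauss_vec)
qed

lemma zvec_data: "k \<le> d \<Longrightarrow> zvec d \<omega> i k = fst \<omega> (i, k)"
  by (simp add: zvec_def)

lemma has_moments_zvec:
  assumes "i \<in> {1..n}" "a \<in> {1..d + 1}"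
  shows "has_moments (model n d) (\<lambda>\<omega>. zvec d \<omega> i a)"
proof (cases "a \<le> d")
  case True
  then show ?thesis
    using assms by (simp add: zvec_data has_moments_model_data)
next
  case False
  then show ?thesis
    using assms
    by (auto simp: zvec_def intro!: has_moments_sum has_moments_mult has_moments_model_data
        has_moments_model_weight prob_space_model)
qed

lemma has_moments_Cmat:
  assumes "a \<in> {1..d + 1}" "b \<in> {1..d + 1}"
  shows "has_moments (model n d) (\<lambda>\<omega>. Cmat n d \<omega> a b)"
  unfolding Cmat_def using assms
  by (intro has_moments_mult has_moments_const has_moments_sum has_moments_zvec prob_space_model)
    auto

(* Mixed moments of x^(i)[a] = fst \<omega> (i, a) ("data"), of the label y^(i) = zvec d \<omega> i (d + 1)
   and of w_star[j] = snd \<omega> j ("weight"). *)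
context
  fixes n d i j :: nat
  assumes i: "i \<in> {1..n}" and j: "j \<in> {1..d}"
begin

lemma integral_data_data_weight:
  assumes "a \<in> {1..d}" "b \<in> {1..d}"
  shows "(\<integral>\<omega>. fst \<omega> (i, a) * fst \<omega> (i, b) * snd \<omega> j \<partial>model n d) = 0"
proof -
  have "(\<lambda>\<omega>. fst \<omega> (i, a) * fst \<omega> (i, b) * snd \<omega> j) = model_monomial [(i, a), (i, b)] [j]"
    by (simp add: model_monomial_def fun_eq_iff)
  then show ?thesis
    using assms i j by (simp add: integral_model_monomial gauss_monomial_odd)
qed

lemma integral_data_label_weight:
  assumes "a \<in> {1..d}"
  shows "(\<integral>\<omega>. fst \<omega> (i, a) * zvec d \<omega> i (d + 1) * snd \<omega> j \<partial>model n d)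
    = (if a = j then 1 else 0)"
proof -
  let ?E = "gauss_monomial (data_index n d)"
  have "(\<lambda>\<omega>. fst \<omega> (i, a) * zvec d \<omega> i (d + 1) * snd \<omega> j)
      = (\<lambda>\<omega>. \<Sum>l\<in>{1..d}. model_monomial [(i, a), (i, l)] [l, j] \<omega>)"
    by (simp add: model_monomial_def zvec_def sum_distrib_left sum_distrib_right mult_ac)
  then have "(\<integral>\<omega>. fst \<omega> (i, a) * zvec d \<omega> i (d + 1) * snd \<omega> j \<partial>model n d)
      = (\<Sum>l\<in>{1..d}. ?E [(i, a), (i, l)] * gauss_monomial {1..d} [l, j])"
    using assms i j by (simp add: integral_sum' integrable_model_monomial integral_model_monomial)
  also have "\<dots> = (\<Sum>l\<in>{1..d}. if l = j then (if a = l then 1 else 0) else 0)"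
    using assms i j by (intro sum.cong) (auto simp: gauss_monomial_two)
  finally show ?thesis using j by simp
qed

lemma integral_label_label_weight:
  "(\<integral>\<omega>. zvec d \<omega> i (d + 1) * zvec d \<omega> i (d + 1) * snd \<omega> j \<partial>model n d) = 0"
proof -
  let ?m = "\<lambda>l m. model_monomial [(i, l), (i, m)] [l, m, j]"
  have "(\<lambda>\<omega>. zvec d \<omega> i (d + 1) * zvec d \<omega> i (d + 1) * snd \<omega> j)
      = (\<lambda>\<omega>. \<Sum>l\<in>{1..d}. \<Sum>m\<in>{1..d}. ?m l m \<omega>)"
    by (simp add: model_monomial_def zvec_def sum_distrib_left sum_distrib_right mult_ac)
  moreover have "integrable (model n d) (\<lambda>\<omega>. \<Sum>m\<in>{1..d}. ?m l m \<omega>)" if "l \<in> {1..d}" for l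
    using i j that by (intro Bochner_Integration.integrable_sum integrable_model_monomial) auto
  ultimately show ?thesis
    using i j
    by (simp add: integral_sum' integrable_model_monomial integral_model_monomial
        gauss_monomial_odd)
qed

lemma integral_data_data_label_data:
  assumes i': "i' \<in> {1..n}" and "a \<in> {1..d}" "b \<in> {1..d}"
  shows "(\<integral>\<omega>. fst \<omega> (i, a) * fst \<omega> (i, b) * zvec d \<omega> i' (d + 1) * fst \<omega> (i', j) \<partial>model n d) = 0"
proof -
  have "(\<lambda>\<omega>. fst \<omega> (i, a) * fst \<omega> (i, b) * zvec d \<omega> i' (d + 1) * fst \<omega> (i', j))
      = (\<lambda>\<omega>. \<Sum>l\<in>{1..d}. model_monomial [(i, a), (i, b), (i', l), (i', j)] [l] \<omega>)"
    by (simp add: model_monomial_def zvec_def sum_distrib_left sum_distrib_right mult_ac)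
  then show ?thesis
    using assms i i' j
    by (simp add: integral_sum' integrable_model_monomial integral_model_monomial
        gauss_monomial_odd)
qed

lemma integral_data_label_label_data:
  assumes i': "i' \<in> {1..n}" and a: "a \<in> {1..d}"
  shows "(\<integral>\<omega>. fst \<omega> (i, a) * zvec d \<omega> i (d + 1) * zvec d \<omega> i' (d + 1) * fst \<omega> (i', j) \<partial>model n d)
    = (if a = j then 1 + (if i = i' then real d + 1 else 0) else 0)"
proof -
  let ?x = "\<lambda>l m. [(i, a), (i, l), (i', m), (i', j)]" and ?E = "gauss_monomial (data_index n d)"
  have "(\<lambda>\<omega>. fst \<omega> (i, a) * zvec d \<omega> i (d + 1) * zvec d \<omega> i' (d + 1) * fst \<omega> (i', j))
      = (\<lambda>\<omega>. \<Sum>l\<in>{1..d}. \<Sum>m\<in>{1..d}. model_monomial (?x l m) [l, m] \<omega>)"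
    by (simp add: model_monomial_def zvec_def sum_distrib_left sum_distrib_right mult_ac)
  moreover have "integrable (model n d) (\<lambda>\<omega>. \<Sum>m\<in>{1..d}. model_monomial (?x l m) [l, m] \<omega>)"
    if "l \<in> {1..d}" for l
    using a i i' j that by (intro Bochner_Integration.integrable_sum integrable_model_monomial) auto
  ultimately have
    "(\<integral>\<omega>. fst \<omega> (i, a) * zvec d \<omega> i (d + 1) * zvec d \<omega> i' (d + 1) * fst \<omega> (i', j) \<partial>model n d)
      = (\<Sum>l\<in>{1..d}. \<Sum>m\<in>{1..d}. ?E (?x l m) * gauss_monomial {1..d} [l, m])"
    using a i i' j by (simp add: integral_sum' integrable_model_monomial integral_model_monomial)
  also have "\<dots> = (\<Sum>l\<in>{1..d}. ?E (?x l l))"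
  proof (intro sum.cong refl)
    fix l assume l: "l \<in> {1..d}"
    have "(\<Sum>m\<in>{1..d}. ?E (?x l m) * gauss_monomial {1..d} [l, m])
        = (\<Sum>m\<in>{1..d}. if m = l then ?E (?x l l) else 0)"
      using l by (intro sum.cong) (auto simp: gauss_monomial_two)
    then show "(\<Sum>m\<in>{1..d}. ?E (?x l m) * gauss_monomial {1..d} [l, m]) = ?E (?x l l)"
      using l by simp
  qed
  also have "\<dots> = (\<Sum>l\<in>{1..d}. (if l = a \<and> a = j then 1 else 0)
      + (if i = i' \<and> l = a \<and> a = j then 1 else 0) + (if i = i' \<and> a = j then 1 else 0))"
    using a i i' j by (intro sum.cong) (auto simp: gauss_monomial_four)
  also have "\<dots> = (if a = j then 1 + (if i = i' then real d + 1 else 0) else 0)"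
    using a by (simp add: sum.distrib)
  finally show ?thesis .
qed

lemma integral_label_label_label_data:
  assumes i': "i' \<in> {1..n}"
  shows "(\<integral>\<omega>. zvec d \<omega> i (d + 1) * zvec d \<omega> i (d + 1) * zvec d \<omega> i' (d + 1) * fst \<omega> (i', j)
    \<partial>model n d) = 0"
proof -
  let ?m = "\<lambda>l m p. model_monomial [(i, l), (i, m), (i', p), (i', j)] [l, m, p]"
  have "(\<lambda>\<omega>. zvec d \<omega> i (d + 1) * zvec d \<omega> i (d + 1) * zvec d \<omega> i' (d + 1) * fst \<omega> (i', j))
      = (\<lambda>\<omega>. \<Sum>l\<in>{1..d}. \<Sum>m\<in>{1..d}. \<Sum>p\<in>{1..d}. ?m l m p \<omega>)"
    by (simp add: model_monomial_def zvec_def sum_distrib_left sum_distrib_right mult_ac)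
  moreover have "integrable (model n d) (\<lambda>\<omega>. \<Sum>p\<in>{1..d}. ?m l m p \<omega>)"
    if "l \<in> {1..d}" "m \<in> {1..d}" for l m
    using i i' j that by (intro Bochner_Integration.integrable_sum integrable_model_monomial) auto
  moreover have "integrable (model n d) (\<lambda>\<omega>. \<Sum>m\<in>{1..d}. \<Sum>p\<in>{1..d}. ?m l m p \<omega>)"
    if "l \<in> {1..d}" for l
    using i i' j that by (intro Bochner_Integration.integrable_sum integrable_model_monomial) auto
  ultimately show ?thesis
    using i i' j
    by (simp add: integral_sum' integrable_model_monomial integral_model_monomial
        gauss_monomial_odd)
qed

lemma integral_zvec_zvec_weight:
  assumes "a \<in> {1..d + 1}" "b \<in> {1..d + 1}"
  shows "(\<integral>\<omega>. zvec d \<omega> i a * zvec d \<omega> i b * snd \<omega> j \<partial>model n d)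
    = Eunit (d + 1) j a b + Eunit j (d + 1) a b"
proof -
  consider "a \<le> d" "b \<le> d" | "a \<le> d" "b = d + 1" | "a = d + 1" "b \<le> d" | "a = d + 1" "b = d + 1"
    using assms by fastforce
  then show ?thesis
  proof cases
    case 1
    then show ?thesis
      using integral_data_data_weight[of a b] assms j by (simp add: zvec_data Eunit_def)
  next
    case 2
    then show ?thesis
      using integral_data_label_weight[of a] assms j by (simp add: zvec_data Eunit_def)
  next
    case 3
    then show ?thesis
      using integral_data_label_weight[of b] assms j by (simp add: zvec_data Eunit_def mult.commute)
  next
    case 4
    then show ?thesis
      using integral_label_label_weight j by (simp add: Eunit_def)
  qed
qed

lemma integral_zvec_zvec_label_data:
  assumes "i' \<in> {1..n}" "a \<in> {1..d + 1}" "b \<in> {1..d + 1}"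
  shows "(\<integral>\<omega>. zvec d \<omega> i a * zvec d \<omega> i b * (zvec d \<omega> i' (d + 1) * zvec d \<omega> i' j) \<partial>model n d)
    = (Eunit (d + 1) j a b + Eunit j (d + 1) a b) * (1 + (if i = i' then real d + 1 else 0))"
proof -
  have j_le: "j \<le> d" using j by simp
  consider "a \<le> d" "b \<le> d" | "a \<le> d" "b = d + 1" | "a = d + 1" "b \<le> d" | "a = d + 1" "b = d + 1"
    using assms by fastforce
  then show ?thesis
  proof cases
    case 1
    then show ?thesis
      using integral_data_data_label_data[of i' a b] assms j_le
      by (simp add: zvec_data Eunit_def mult_ac)
  next
    case 2
    then show ?thesis
      using integral_data_label_label_data[of i' a] assms j_le
      by (simp add: zvec_data Eunit_def mult_ac)
  next
    case 3
    then show ?thesis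
      using integral_data_label_label_data[of i' b] assms j_le
      by (simp add: zvec_data Eunit_def mult_ac)
  next
    case 4
    then show ?thesis
      using integral_label_label_label_data[of i'] assms j_le
      by (simp add: zvec_data Eunit_def mult_ac)
  qed
qed

end

context
  fixes n d j :: nat
  assumes n: "n \<ge> 1" and j: "j \<in> {1..d}"
begin

lemma integral_Cmat_mult_weight:
  assumes "a \<in> {1..d + 1}" "b \<in> {1..d + 1}"
  shows "(\<integral>\<omega>. Cmat n d \<omega> a b * snd \<omega> j \<partial>model n d) = Eunit (d + 1) j a b + Eunit j (d + 1) a b"
proof -
  let ?z3 = "\<lambda>i \<omega>. zvec d \<omega> i a * zvec d \<omega> i b * snd \<omega> j"
  have "(\<lambda>\<omega>. Cmat n d \<omega> a b * snd \<omega> j) = (\<lambda>\<omega>. (\<Sum>i\<in>{1..n}. ?z3 i \<omega>) / real n)"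
    by (simp add: Cmat_def sum_distrib_right)
  moreover have "integrable (model n d) (?z3 i)" if "i \<in> {1..n}" for i
    using assms j that
    by (intro has_moments_integrable has_moments_mult has_moments_zvec has_moments_model_weight)
  ultimately have "(\<integral>\<omega>. Cmat n d \<omega> a b * snd \<omega> j \<partial>model n d)
      = (\<Sum>i\<in>{1..n}. integral\<^sup>L (model n d) (?z3 i)) / real n"
    by (simp add: integral_sum')
  also have "\<dots> = Eunit (d + 1) j a b + Eunit j (d + 1) a b"
    using assms j n by (simp add: integral_zvec_zvec_weight)
  finally show ?thesis .
qed

lemma integral_Cmat_mult_Cmat:
  assumes "a \<in> {1..d + 1}" "b \<in> {1..d + 1}"
  shows "(\<integral>\<omega>. Cmat n d \<omega> a b * Cmat n d \<omega> (d + 1) j \<partial>model n d)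
    = (1 + (real d + 1) / real n) * (Eunit (d + 1) j a b + Eunit j (d + 1) a b)"
proof -
  let ?z4 = "\<lambda>i i' \<omega>. zvec d \<omega> i a * zvec d \<omega> i b * (zvec d \<omega> i' (d + 1) * zvec d \<omega> i' j)"
    and ?S = "Eunit (d + 1) j a b + Eunit j (d + 1) a b"
  have "(\<lambda>\<omega>. Cmat n d \<omega> a b * Cmat n d \<omega> (d + 1) j)
      = (\<lambda>\<omega>. (\<Sum>i\<in>{1..n}. \<Sum>i'\<in>{1..n}. ?z4 i i' \<omega>) / (real n)\<^sup>2)"
    by (simp add: Cmat_def sum_product power2_eq_square)
  moreover have z4: "integrable (model n d) (?z4 i i')" if "i \<in> {1..n}" "i' \<in> {1..n}" for i i'
    using assms j that by (intro has_moments_integrable has_moments_mult has_moments_zvec) auto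
  moreover have "integrable (model n d) (\<lambda>\<omega>. \<Sum>i'\<in>{1..n}. ?z4 i i' \<omega>)" if "i \<in> {1..n}" for i
    using z4 that by auto
  ultimately have "(\<integral>\<omega>. Cmat n d \<omega> a b * Cmat n d \<omega> (d + 1) j \<partial>model n d)
      = (\<Sum>i\<in>{1..n}. \<Sum>i'\<in>{1..n}. integral\<^sup>L (model n d) (?z4 i i')) / (real n)\<^sup>2"
    by (simp add: integral_sum')
  also have "\<dots>
      = (\<Sum>i\<in>{1..n}. \<Sum>i'\<in>{1..n}. ?S * (1 + (if i = i' then real d + 1 else 0))) / (real n)\<^sup>2"
    using assms j
    by (intro arg_cong[where f = "\<lambda>x. x / _"] sum.cong refl integral_zvec_zvec_label_data) auto
  also have "\<dots> = (1 + (real d + 1) / real n) * ?S"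
    using n
    by (simp add: sum.distrib distrib_left if_distrib[of "\<lambda>x. _ * x"] field_simps power2_eq_square)
  finally show ?thesis .
qed

lemma integral_Cmat_mult_residual:
  assumes "a \<in> {1..d + 1}" "b \<in> {1..d + 1}"
  shows "(\<integral>\<omega>. Cmat n d \<omega> a b * (snd \<omega> j - Cmat n d \<omega> (d + 1) j / (1 + (real d + 1) / real n))
    \<partial>model n d) = 0"
proof -
  have "integrable (model n d) (\<lambda>\<omega>. Cmat n d \<omega> a b * snd \<omega> j)"
    "integrable (model n d) (\<lambda>\<omega>. Cmat n d \<omega> a b * Cmat n d \<omega> (d + 1) j)"
    using assms j
    by (auto intro!: has_moments_integrable has_moments_mult has_moments_Cmat
        has_moments_model_weight)
  moreover have "0 < 1 + (real d + 1) / real n"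
    by (intro add_pos_nonneg) auto
  ultimately show ?thesis
    using integral_Cmat_mult_weight[OF assms] integral_Cmat_mult_Cmat[OF assms]
    by (simp add: right_diff_distrib)
qed

lemma fobj_minimal_at_scaled_Eunit:
  defines "k \<equiv> 1 + (real d + 1) / real n"
  shows "fobj n d j (\<lambda>p q. - (1 / k) * Eunit (d + 1) j p q) \<le> fobj n d j X"
proof -
  define X\<^sub>j where "X\<^sub>j = (\<lambda>p q. - (1 / k) * Eunit (d + 1) j p q)"
  define residual where "residual = (\<lambda>\<omega>. snd \<omega> j - Cmat n d \<omega> (d + 1) j / k)"
  have minimizer: "frob d (Cmat n d \<omega>) X\<^sub>j + snd \<omega> j = residual \<omega>" for \<omega>
    using frob_scaled_Eunit[of "d + 1" d j "Cmat n d \<omega>" "- (1 / k)"] j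
    by (simp add: X\<^sub>j_def residual_def)
  have "fobj n d j X\<^sub>j = (\<integral>\<omega>. (residual \<omega>)\<^sup>2 \<partial>model n d)"
    unfolding fobj_def minimizer ..
  also have "\<dots> \<le> (\<integral>\<omega>. (frob d (Cmat n d \<omega>) (\<lambda>p q. X p q - X\<^sub>j p q) + residual \<omega>)\<^sup>2 \<partial>model n d)"
  proof (rule frob_least_squares)
    show "has_moments (model n d) residual"
      unfolding residual_def using j
      by (auto intro!: has_moments_diff has_moments_mult has_moments_const has_moments_Cmat
          has_moments_model_weight prob_space_model simp: divide_inverse)
    show "(\<integral>\<omega>. Cmat n d \<omega> a b * residual \<omega> \<partial>model n d) = 0"
      if "a \<in> {1..d + 1}" "b \<in> {1..d + 1}" for a b
      unfolding residual_def k_def using that by (rule integral_Cmat_mult_residual)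
  qed (auto intro: prob_space_model has_moments_Cmat)
  also have "\<dots> = fobj n d j X"
    unfolding fobj_def frob_diff[of d _ X X\<^sub>j] minimizer[symmetric] by (simp add: algebra_simps)
  finally show ?thesis
    unfolding X\<^sub>j_def .
qed

end

theorem lemma2:
  fixes n d j :: nat
  assumes "d \<ge> 1" and "n \<ge> 1" and "j \<in> {1..d}"
  shows "\<forall>X. fobj n d j
           (\<lambda>p q. - (1 / ((real n - 1) / real n + (real d + 2) / real n)) * Eunit (d+1) j p q)
         \<le> fobj n d j X"
proof
  fix X
  have "(real n - 1) / real n + (real d + 2) / real n = 1 + (real d + 1) / real n"
    using assms(2) by (simp add: field_simps)
  then show "fobj n d j
      (\<lambda>p q. - (1 / ((real n - 1) / real n + (real d + 2) / real n)) * Eunit (d+1) j p q)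
    \<le> fobj n d j X"
    using fobj_minimal_at_scaled_Eunit[OF assms(2,3)] by simp
qed

end
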